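(* Let $G$ be a finite connected graph with node set $V$ and radius $\operatorname{rad}(G)$. Suppose a one-to-all distance based algorithm for computing the radius of $G$ performs one-to-all distance queries from exactly the nodes of a set $L\subseteq V$. Then for every ranking $r$ of $V$, the set $L\cup A_r(L)$ is a radius certificate of $G$. Consequently, any one-to-all distance based algorithm for the radius performs at least $\frac{1}{2}|L_{OPT}|$ one-to-all distance queries, where $|L_{OPT}|$ is the minimum size of a radius certificate of $G$ (equivalently, the minimum size of a covering of $V$ with the collection $\{\overline{B}(u,\operatorname{rad}(G)) : u\in V\}$).
   Context: $G$ is an undirected unweighted connected graph with finite node set $V$; $d(u,v)$ is the shortest-path distance, $e(u)=\max_{v\in V}d(u,v)$ the eccentricity, $\operatorname{rad}(G)=\min_u e(u)$. A ranking $r$ is an injective map from $V$ to a totally ordered set. The antipode $A_r(u)$ of $u$ is the node $v$ maximizing the pair $(d(u,v),r(v))$ in lexicographic order (a furthest node from $u$ of highest rank), and $A_r(W)=\{A_r(u):u\in W\}$. The coball is $\overline{B}(u,\rho)=\{v\in V: d(u,v)\ge \rho\}$. A radius certificate is a set $L\subseteq V$ such that every $u\in V$ has $\max_{x\in L}d(u,x)\ge \operatorname{rad}(G)$. A one-to-all distance query from a node $x$ returns the vector $(d(x,v))_{v\in V}$. A one-to-all distance based algorithm is one that accesses the graph only through one-to-all distance queries and relies solely on the distances known from its queries, the triangle inequality and non-negativity of distances for bounding unknown distances (so its correctness certifies, for every node $u$, that $e(u)\ge\operatorname{rad}(G)$ by such reasoning). *)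

theory Defs
  imports Main "HOL-Library.Extended_Real"
begin

definition is_walk :: "('a \<Rightarrow> 'a \<Rightarrow> bool) \<Rightarrow> 'a list \<Rightarrow> bool" where
  "is_walk E xs \<longleftrightarrow> xs \<noteq> [] \<and> (\<forall>i. Suc i < length xs \<longrightarrow> E (xs ! i) (xs ! Suc i))"

definition graph_connected :: "'a set \<Rightarrow> ('a \<Rightarrow> 'a \<Rightarrow> bool) \<Rightarrow> bool" where
  "graph_connected V E \<longleftrightarrow> V \<noteq> {} \<and>
     (\<forall>u\<in>V. \<forall>v\<in>V. \<exists>xs. is_walk E xs \<and> hd xs = u \<and> last xs = v)"

definition gdist :: "('a \<Rightarrow> 'a \<Rightarrow> bool) \<Rightarrow> 'a \<Rightarrow> 'a \<Rightarrow> nat" where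
  "gdist E u v = (LEAST n. \<exists>xs. is_walk E xs \<and> hd xs = u \<and> last xs = v \<and> length xs = Suc n)"

definition ecc :: "'a set \<Rightarrow> ('a \<Rightarrow> 'a \<Rightarrow> bool) \<Rightarrow> 'a \<Rightarrow> nat" where
  "ecc V E u = Max (gdist E u ` V)"

definition grad :: "'a set \<Rightarrow> ('a \<Rightarrow> 'a \<Rightarrow> bool) \<Rightarrow> nat" where
  "grad V E = Min (ecc V E ` V)"

text \<open>Antipode w.r.t. ranking r: furthest node of highest rank
  (maximizer of the pair (d(u,v), r(v)) in lexicographic order).\<close>
definition antipode :: "'a set \<Rightarrow> ('a \<Rightarrow> 'a \<Rightarrow> bool) \<Rightarrow> ('a \<Rightarrow> 'b::linorder) \<Rightarrow> 'a \<Rightarrow> 'a" where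
  "antipode V E r u = (THE v. v \<in> V \<and>
     (\<forall>w\<in>V. gdist E u w < gdist E u v \<or> (gdist E u w = gdist E u v \<and> r w \<le> r v)))"

definition antipodes :: "'a set \<Rightarrow> ('a \<Rightarrow> 'a \<Rightarrow> bool) \<Rightarrow> ('a \<Rightarrow> 'b::linorder) \<Rightarrow> 'a set \<Rightarrow> 'a set" where
  "antipodes V E r W = antipode V E r ` W"

definition coball :: "'a set \<Rightarrow> ('a \<Rightarrow> 'a \<Rightarrow> bool) \<Rightarrow> 'a \<Rightarrow> nat \<Rightarrow> 'a set" where
  "coball V E u \<rho> = {v \<in> V. gdist E u v \<ge> \<rho>}"

definition radius_certificate :: "'a set \<Rightarrow> ('a \<Rightarrow> 'a \<Rightarrow> bool) \<Rightarrow> 'a set \<Rightarrow> bool" where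
  "radius_certificate V E L \<longleftrightarrow> L \<subseteq> V \<and> (\<forall>u\<in>V. \<exists>x\<in>L. gdist E u x \<ge> grad V E)"

text \<open>A function D on V x V is consistent with the one-to-all queries from L if it
  agrees with the true distances on all queried pairs and satisfies the generic
  metric axioms (non-negativity, triangle inequality; also symmetry and zero
  diagonal, which are valid for any undirected graph).\<close>
definition query_consistent ::
  "'a set \<Rightarrow> ('a \<Rightarrow> 'a \<Rightarrow> bool) \<Rightarrow> 'a set \<Rightarrow> ('a \<Rightarrow> 'a \<Rightarrow> real) \<Rightarrow> bool" where
  "query_consistent V E L D \<longleftrightarrow>
     (\<forall>x\<in>L. \<forall>v\<in>V. D x v = real (gdist E x v)) \<and>
     (\<forall>a\<in>V. \<forall>b\<in>V. D a b \<ge> 0) \<and>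
     (\<forall>a\<in>V. D a a = 0) \<and>
     (\<forall>a\<in>V. \<forall>b\<in>V. D a b = D b a) \<and>
     (\<forall>a\<in>V. \<forall>b\<in>V. \<forall>c\<in>V. D a c \<le> D a b + D b c)"

text \<open>The queries from L suffice for a one-to-all distance based algorithm to certify
  e(u) >= rad(G) for every u: every distance function consistent with the
  query answers gives u eccentricity at least rad(G).\<close>
definition otoa_certifies_radius :: "'a set \<Rightarrow> ('a \<Rightarrow> 'a \<Rightarrow> bool) \<Rightarrow> 'a set \<Rightarrow> bool" where
  "otoa_certifies_radius V E L \<longleftrightarrow>
     (\<forall>u\<in>V. \<forall>D. query_consistent V E L D \<longrightarrow> (\<exists>v\<in>V. D u v \<ge> real (grad V E)))"

end

theory Submission
  imports Defs "HOL-Library.Product_Lexorder"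
begin

text \<open>Whatever the queries from \<open>L\<close> reveal is also consistent with the pseudometric
\<open>D(a, b) = max\<^sub>x\<^sub>\<in>\<^sub>L |d(x, a) - d(x, b)|\<close>, which agrees with \<open>d\<close> on \<open>L \<times> V\<close>. So if the
algorithm certifies \<open>e(u) \<ge> rad(G)\<close>, some \<open>v\<close> and \<open>x \<in> L\<close> satisfy
\<open>|d(x, u) - d(x, v)| \<ge> rad(G)\<close>. Either \<open>d(x, u) \<ge> rad(G)\<close>, or
\<open>d(x, A(x)) \<ge> d(x, v) \<ge> d(x, u) + rad(G)\<close> and the triangle inequality gives
\<open>d(u, A(x)) \<ge> rad(G)\<close>. The bound on the number of queries follows because
\<open>|L \<union> A(L)| \<le> 2|L|\<close>.\<close>

lemma is_walk_Cons_Cons: "is_walk E (x # y # zs) \<longleftrightarrow> E x y \<and> is_walk E (y # zs)"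
  unfolding is_walk_def by (auto simp: All_less_Suc2)

lemma is_walk_append:
  assumes "is_walk E xs" "is_walk E (y # ys)" "last xs = y"
  shows "is_walk E (xs @ ys)"
  using assms
proof (induction xs rule: induct_list012)
  case (2 x) then show ?case by simp
next
  case (3 x x' xs) then show ?case by (simp add: is_walk_Cons_Cons)
qed (simp add: is_walk_def)

lemma is_walk_rev:
  assumes sym: "\<And>u v. E u v \<longleftrightarrow> E v u" and "is_walk E xs"
  shows "is_walk E (rev xs)"
  using assms(2)
proof (induction xs rule: induct_list012)
  case (3 x y zs)
  then have "is_walk E (rev (y # zs))" and "E y x"
    using sym by (simp_all only: is_walk_Cons_Cons)
  moreover have "is_walk E [y, x] \<longleftrightarrow> E y x" by (simp add: is_walk_Cons_Cons is_walk_def)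
  ultimately show ?case using is_walk_append[of E "rev (y # zs)" y "[x]"] by simp
qed (simp_all add: is_walk_def)

lemma gdist_le_walk_length:
  assumes "is_walk E xs" "hd xs = u" "last xs = v"
  shows "gdist E u v \<le> length xs - 1"
proof -
  have "length xs = Suc (length xs - 1)" using assms(1) by (cases xs) (auto simp: is_walk_def)
  then show ?thesis unfolding gdist_def using assms by (intro Least_le) blast
qed

lemma gdist_self [simp]: "gdist E u u = 0"
  using gdist_le_walk_length[of E "[u]" u u] by (simp add: is_walk_def)

lemma the_argmax_inj_on:
  fixes f :: "'a \<Rightarrow> 'b::linorder"
  assumes "finite V" "V \<noteq> {}" "inj_on f V"
  defines "m \<equiv> THE v. v \<in> V \<and> (\<forall>w\<in>V. f w \<le> f v)"
  shows "m \<in> V" "\<And>w. w \<in> V \<Longrightarrow> f w \<le> f m"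
proof -
  have "Max (f ` V) \<in> f ` V" using assms(1,2) by simp
  then obtain a where a: "a \<in> V" "f a = Max (f ` V)" by (metis imageE)
  have a_max: "\<forall>w\<in>V. f w \<le> f a" using a assms(1) by simp
  with a(1) have "a \<in> V \<and> (\<forall>w\<in>V. f w \<le> f a)" ..
  moreover have "v = a" if "v \<in> V \<and> (\<forall>w\<in>V. f w \<le> f v)" for v
    using that a(1) a_max assms(3) by (meson inj_onD order.antisym)
  ultimately have "m \<in> V \<and> (\<forall>w\<in>V. f w \<le> f m)"
    unfolding m_def by (rule theI)
  then show "m \<in> V" "\<And>w. w \<in> V \<Longrightarrow> f w \<le> f m" by blast+
qed

lemma antipode_furthest:
  fixes r :: "'a \<Rightarrow> 'b::linorder"
  assumes "finite V" "V \<noteq> {}" "inj_on r V"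
  shows "antipode V E r x \<in> V" and "\<And>v. v \<in> V \<Longrightarrow> gdist E x v \<le> gdist E x (antipode V E r x)"
proof -
  have lex: "(a, b) \<le> (c, d) \<longleftrightarrow> a < c \<or> a = c \<and> b \<le> d" for a c :: nat and b d :: 'b
    by auto
  have antipode_eq: "antipode V E r x =
      (THE v. v \<in> V \<and> (\<forall>w\<in>V. (gdist E x w, r w) \<le> (gdist E x v, r v)))"
    unfolding antipode_def lex ..
  have "inj_on (\<lambda>v. (gdist E x v, r v)) V"
    using assms(3) by (auto simp: inj_on_def)
  note argmax = the_argmax_inj_on[OF assms(1,2) this]
  show "antipode V E r x \<in> V" unfolding antipode_eq by (rule argmax(1))
  show "gdist E x v \<le> gdist E x (antipode V E r x)" if "v \<in> V" for v
    using argmax(2)[OF that] unfolding antipode_eq lex by auto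
qed

definition landmark_dist :: "'a set \<Rightarrow> ('a \<Rightarrow> 'a \<Rightarrow> nat) \<Rightarrow> 'a \<Rightarrow> 'a \<Rightarrow> real" where
  "landmark_dist L d a b = Max ((\<lambda>x. \<bar>real (d x a) - real (d x b)\<bar>) ` L)"

lemma landmark_dist_ge:
  "finite L \<Longrightarrow> x \<in> L \<Longrightarrow> \<bar>real (d x a) - real (d x b)\<bar> \<le> landmark_dist L d a b"
  unfolding landmark_dist_def by simp

lemma landmark_dist_attained:
  assumes "finite L" "L \<noteq> {}"
  obtains x where "x \<in> L" "landmark_dist L d a b = \<bar>real (d x a) - real (d x b)\<bar>"
proof -
  have "landmark_dist L d a b \<in> (\<lambda>x. \<bar>real (d x a) - real (d x b)\<bar>) ` L"
    unfolding landmark_dist_def using assms by (intro Max_in) auto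
  then show ?thesis using that by blast
qed

locale connected_graph =
  fixes V :: "'a set" and E :: "'a \<Rightarrow> 'a \<Rightarrow> bool"
  assumes finite_nodes: "finite V"
    and sym_edges: "\<And>u v. E u v \<longleftrightarrow> E v u"
    and connected: "graph_connected V E"
begin

lemma shortest_walk_exists:
  assumes "u \<in> V" "v \<in> V"
  obtains xs where "is_walk E xs" "hd xs = u" "last xs = v" "length xs = Suc (gdist E u v)"
proof -
  obtain xs where "is_walk E xs" "hd xs = u" "last xs = v"
    using connected assms unfolding graph_connected_def by blast
  moreover have "length xs = Suc (length xs - 1)"
    using \<open>is_walk E xs\<close> by (cases xs) (auto simp: is_walk_def)
  ultimately have "\<exists>n xs. is_walk E xs \<and> hd xs = u \<and> last xs = v \<and> length xs = Suc n"
    by blast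
  then have "\<exists>xs. is_walk E xs \<and> hd xs = u \<and> last xs = v \<and> length xs = Suc (gdist E u v)"
    unfolding gdist_def by (rule LeastI_ex)
  then show ?thesis using that by blast
qed

lemma gdist_sym:
  assumes "u \<in> V" "v \<in> V"
  shows "gdist E u v = gdist E v u"
proof -
  have "gdist E v u \<le> gdist E u v" if uv: "u \<in> V" "v \<in> V" for u v
  proof -
    obtain xs where xs: "is_walk E xs" "hd xs = u" "last xs = v" "length xs = Suc (gdist E u v)"
      using shortest_walk_exists[OF uv] .
    then have "xs \<noteq> []" by auto
    then have "gdist E v u \<le> length (rev xs) - 1"
      using xs is_walk_rev[OF sym_edges xs(1)]
      by (intro gdist_le_walk_length) (auto simp: hd_rev last_rev)
    then show ?thesis using xs by simp
  qed
  then show ?thesis using assms by (meson order.antisym)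
qed

lemma gdist_triangle:
  assumes "u \<in> V" "v \<in> V" "w \<in> V"
  shows "gdist E u w \<le> gdist E u v + gdist E v w"
proof -
  obtain xs where xs: "is_walk E xs" "hd xs = u" "last xs = v" "length xs = Suc (gdist E u v)"
    using shortest_walk_exists assms by blast
  obtain ys where ys: "is_walk E ys" "hd ys = v" "last ys = w" "length ys = Suc (gdist E v w)"
    using shortest_walk_exists assms by blast
  then have ys_Cons: "ys = v # tl ys" by (cases ys) auto
  have "is_walk E (xs @ tl ys)" using is_walk_append[of E xs v "tl ys"] xs ys ys_Cons by simp
  moreover have "hd (xs @ tl ys) = u" using xs by (cases xs) auto
  moreover have "last (xs @ tl ys) = w"
    using xs(3) ys(3) ys_Cons by (metis last_ConsL last_ConsR last_append)
  ultimately have "gdist E u w \<le> length (xs @ tl ys) - 1" by (rule gdist_le_walk_length)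
  then show ?thesis using xs ys by simp
qed

lemma query_consistent_landmark_dist:
  assumes "L \<subseteq> V" "L \<noteq> {}"
  shows "query_consistent V E L (landmark_dist L (gdist E))"
proof -
  have finite_L: "finite L" using assms(1) finite_nodes finite_subset by blast
  note ge = landmark_dist_ge[OF finite_L, of _ "gdist E"]
  note attained = landmark_dist_attained[OF finite_L assms(2), of "gdist E"]
  have "landmark_dist L (gdist E) y v = real (gdist E y v)" if "y \<in> L" "v \<in> V" for y v
  proof (rule order.antisym)
    obtain x where "x \<in> L"
      and x: "landmark_dist L (gdist E) y v = \<bar>real (gdist E x y) - real (gdist E x v)\<bar>"
      using attained .
    have "gdist E x v \<le> gdist E x y + gdist E y v" "gdist E x y \<le> gdist E x v + gdist E v y"
      using \<open>x \<in> L\<close> that assms(1) by (auto intro!: gdist_triangle)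
    then show "landmark_dist L (gdist E) y v \<le> real (gdist E y v)"
      using x gdist_sym that assms(1) by auto
    show "real (gdist E y v) \<le> landmark_dist L (gdist E) y v"
      using ge[OF \<open>y \<in> L\<close>, of y v] by simp
  qed
  moreover have "landmark_dist L (gdist E) a c \<le>
      landmark_dist L (gdist E) a b + landmark_dist L (gdist E) b c" for a b c
  proof -
    obtain x where "x \<in> L"
      and x: "landmark_dist L (gdist E) a c = \<bar>real (gdist E x a) - real (gdist E x c)\<bar>"
      using attained .
    then show ?thesis using ge[OF \<open>x \<in> L\<close>, of a b] ge[OF \<open>x \<in> L\<close>, of b c] by linarith
  qed
  moreover have "landmark_dist L (gdist E) a b = landmark_dist L (gdist E) b a" for a b
    unfolding landmark_dist_def by (simp add: abs_minus_commute)
  moreover have "0 \<le> landmark_dist L (gdist E) a b" for a b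
    using attained by (metis abs_ge_zero)
  moreover have "landmark_dist L (gdist E) a a = 0" for a
    using attained by (metis abs_zero diff_self)
  ultimately show ?thesis unfolding query_consistent_def by blast
qed

lemma antipodes_radius_certificate:
  fixes r :: "'a \<Rightarrow> 'b::linorder"
  assumes inj: "inj_on r V" and L: "L \<subseteq> V" "L \<noteq> {}"
    and certifies: "otoa_certifies_radius V E L"
  shows "radius_certificate V E (L \<union> antipodes V E r L)"
proof -
  have finite_L: "finite L" using L(1) finite_nodes finite_subset by blast
  note antipode = antipode_furthest[OF finite_nodes _ inj]
  have "\<exists>z \<in> L \<union> antipodes V E r L. grad V E \<le> gdist E u z" if u: "u \<in> V" for u
  proof -
    obtain v where v: "v \<in> V" "real (grad V E) \<le> landmark_dist L (gdist E) u v"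
      using certifies u query_consistent_landmark_dist[OF L]
      unfolding otoa_certifies_radius_def by blast
    obtain x where "x \<in> L"
      and x: "landmark_dist L (gdist E) u v = \<bar>real (gdist E x u) - real (gdist E x v)\<bar>"
      using landmark_dist_attained[OF finite_L L(2)] .
    then have xV: "x \<in> V" using L(1) by auto
    show ?thesis
    proof (cases "gdist E x v \<le> gdist E x u")
      case True
      then have "grad V E \<le> gdist E u x" using v x gdist_sym[OF u xV] by linarith
      then show ?thesis using \<open>x \<in> L\<close> by blast
    next
      case False
      let ?a = "antipode V E r x"
      have "grad V E + gdist E x u \<le> gdist E x v" using False v x by linarith
      also have "\<dots> \<le> gdist E x ?a" using antipode v u by blast
      also have "\<dots> \<le> gdist E x u + gdist E u ?a"
        using antipode u xV by (blast intro: gdist_triangle)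
      finally have "grad V E \<le> gdist E u ?a" by simp
      moreover have "?a \<in> antipodes V E r L" unfolding antipodes_def using \<open>x \<in> L\<close> by blast
      ultimately show ?thesis by blast
    qed
  qed
  moreover have "antipodes V E r L \<subseteq> V" unfolding antipodes_def using antipode L by blast
  ultimately show ?thesis unfolding radius_certificate_def using L(1) by auto
qed

end

lemma Min_card_radius_certificate_le:
  assumes "finite V" "radius_certificate V E C"
  shows "Min (card ` {C. radius_certificate V E C}) \<le> card C"
proof -
  have "{C. radius_certificate V E C} \<subseteq> Pow V" unfolding radius_certificate_def by blast
  then have "finite {C. radius_certificate V E C}" using assms(1) finite_subset by blast
  then show ?thesis using assms(2) by (intro Min_le finite_imageI) auto
qed

theorem theorem2:
  fixes V :: "'a set" and E :: "'a \<Rightarrow> 'a \<Rightarrow> bool" and L :: "'a set"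
  assumes "finite V"
    and "\<And>u v. E u v \<Longrightarrow> u \<in> V \<and> v \<in> V"
    and "\<And>u v. E u v \<longleftrightarrow> E v u"
    and "graph_connected V E"
    and "L \<subseteq> V" and "L \<noteq> {}"
    and "otoa_certifies_radius V E L"
  shows "(\<forall>r :: 'a \<Rightarrow> 'b::linorder. inj_on r V \<longrightarrow>
            radius_certificate V E (L \<union> antipodes V E r L))
       \<and> real (card L) \<ge> real (Min (card ` {C. radius_certificate V E C})) / 2"
proof -
  interpret connected_graph V E using assms(1,3,4) by unfold_locales
  obtain rank :: "'a \<Rightarrow> nat" where rank: "inj_on rank V"
    using finite_imp_inj_to_nat_seg[OF assms(1)] by blast
  have finite_L: "finite L" using assms(1,5) finite_subset by blast
  have "Min (card ` {C. radius_certificate V E C}) \<le> card (L \<union> antipodes V E rank L)"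
    using Min_card_radius_certificate_le[OF assms(1)] antipodes_radius_certificate[OF rank assms(5-7)]
    by blast
  also have "\<dots> \<le> card L + card (antipodes V E rank L)" by (rule card_Un_le)
  also have "\<dots> \<le> 2 * card L" unfolding antipodes_def using card_image_le[OF finite_L] by simp
  finally have "real (Min (card ` {C. radius_certificate V E C})) / 2 \<le> real (card L)" by linarith
  with antipodes_radius_certificate[OF _ assms(5-7)] show ?thesis by blast
qed

end
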